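(* Let $n\ge2$, $m\in\mathbb{Z}_{>0}$, $q\in(-1,1)$. Let $\boldsymbol{\xi}\in\mathbb{R}^n$ with $\xi_j-\xi_k\notin2\pi\mathbb{Z}$ for $j\ne k$ satisfy \[ e^{im\xi_j}=(-1)^{n-1}\prod_{1\le k\le n,\,k\ne j}\frac{1-qe^{i(\xi_j-\xi_k)}}{e^{i(\xi_j-\xi_k)}-q}\qquad(j=1,\dots,n). \] Then for every $\mu$ in the $\mathbb{Z}$-span of $\omega_1,\dots,\omega_{n-1}$ with $\mu_1-\mu_n=m+1$, one has $P_{\texttt{a};\mu}(\boldsymbol{\xi};q)=q\,P_{\texttt{a};\mu-e_1+e_n}(\boldsymbol{\xi};q)$.
   Context: $e_1,\dots,e_n$ is the standard basis of $\mathbb{R}^n$, $\omega_j=e_1+\dots+e_j-\frac jn(e_1+\dots+e_n)$. $C_{\texttt{a}}(\boldsymbol{\xi};q)=\prod_{1\le j<k\le n}\frac{1-qe^{-i(\xi_j-\xi_k)}}{1-e^{-i(\xi_j-\xi_k)}}$ and $P_{\texttt{a};\mu}(\boldsymbol{\xi};q)=\sum_{\sigma\in S_n}C_{\texttt{a}}(\xi_{\sigma_1},\dots,\xi_{\sigma_n};q)\exp(i\xi_{\sigma_1}\mu_1+\dots+i\xi_{\sigma_n}\mu_n)$. *)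

theory Defs
  imports Complex_Main "HOL-Combinatorics.Permutations"
begin

text \<open>Vectors in R^n are represented as functions nat => real, indexed by 1..n.\<close>

definition omega :: "nat \<Rightarrow> nat \<Rightarrow> nat \<Rightarrow> real" where
  "omega n j l = (if l \<le> j then 1 else 0) - real j / real n"

definition weight_lattice :: "nat \<Rightarrow> (nat \<Rightarrow> real) set" where
  "weight_lattice n = {\<mu>. \<exists>c :: nat \<Rightarrow> int. \<forall>l\<in>{1..n}.
       \<mu> l = (\<Sum>j=1..n-1. of_int (c j) * omega n j l)}"

definition C_a :: "nat \<Rightarrow> (nat \<Rightarrow> real) \<Rightarrow> real \<Rightarrow> complex" where
  "C_a n \<xi> q = (\<Prod>j\<in>{1..n}. \<Prod>k\<in>{j<..n}.
      (1 - of_real q * exp (- \<i> * of_real (\<xi> j - \<xi> k))) /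
      (1 - exp (- \<i> * of_real (\<xi> j - \<xi> k))))"

definition P_a :: "nat \<Rightarrow> (nat \<Rightarrow> real) \<Rightarrow> real \<Rightarrow> (nat \<Rightarrow> real) \<Rightarrow> complex" where
  "P_a n \<xi> q \<mu> = (\<Sum>\<sigma> | \<sigma> permutes {1..n}.
      C_a n (\<lambda>l. \<xi> (\<sigma> l)) q * exp (\<i> * of_real (\<Sum>l=1..n. \<xi> (\<sigma> l) * \<mu> l)))"

end

theory Submission
  imports Defs "HOL-Analysis.Analysis"
begin

text \<open>
  Write \<mu>' = \<mu> - e_1 + e_n. Then P_\<mu> - q P_\<mu>' is the sum over permutations \<sigma> of
  C(y) exp(i<y,\<mu>>) (1 - q exp(-i(y_1 - y_n))) with y = \<xi> \<circ> \<sigma>. Reindexing by the cyclic shift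
  (1 2 ... n) moves y_1 to the end, which multiplies C by (-1)^(n-1) times the product of the
  Bethe factors of y_1, i.e. by exp(i m y_1). The resulting summand is antisymmetric under
  \<sigma> \<mapsto> \<sigma> \<circ> (1 2): because \<mu>_1 - \<mu>_n = m + 1 its phase changes by exp(i(y_1 - y_2)), and together
  with the last factor this exactly compensates the change of the factor of C belonging to the
  pair (1, 2). Hence the sum vanishes.
\<close>

definition increasing_pairs :: "'a::linorder set \<Rightarrow> ('a \<times> 'a) set" where
  "increasing_pairs S = {(j, k) \<in> S \<times> S. j < k}"

lemma finite_increasing_pairs [simp]: "finite S \<Longrightarrow> finite (increasing_pairs S)"
  by (rule finite_subset[of _ "S \<times> S"]) (auto simp: increasing_pairs_def)

lemma prod_increasing_pairs_permute:
  fixes f :: "'a::linorder \<Rightarrow> 'a \<Rightarrow> 'b::comm_monoid_mult"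
  assumes "finite S" and \<sigma>: "\<sigma> permutes S"
  shows "(\<Prod>(j, k)\<in>increasing_pairs S. f (\<sigma> j) (\<sigma> k)) =
    (\<Prod>(a, b)\<in>{(a, b)\<in>increasing_pairs S. inv \<sigma> a < inv \<sigma> b}. f a b) *
    (\<Prod>(a, b)\<in>{(a, b)\<in>increasing_pairs S. inv \<sigma> b < inv \<sigma> a}. f b a)"
proof -
  let ?P = "increasing_pairs S"
  let ?A = "{(j, k)\<in>?P. \<sigma> j < \<sigma> k}"
  let ?B = "{(j, k)\<in>?P. \<sigma> k < \<sigma> j}"
  note in_image = permutes_in_image[OF \<sigma>] permutes_in_image[OF permutes_inv[OF \<sigma>]]
  have inverses: "inv \<sigma> (\<sigma> j) = j" "\<sigma> (inv \<sigma> a) = a" for j a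
    using permutes_inverses[OF \<sigma>] by auto
  have "\<sigma> j \<noteq> \<sigma> k" if "j < k" for j k
    using that permutes_inj[OF \<sigma>] by (metis less_irrefl inv_f_f)
  then have split: "?P = ?A \<union> ?B" "?A \<inter> ?B = {}"
    by (auto simp: increasing_pairs_def, metis linorder_neqE)
  have bij_A: "bij_betw (\<lambda>(j, k). (\<sigma> j, \<sigma> k)) ?A {(a, b)\<in>?P. inv \<sigma> a < inv \<sigma> b}"
    by (rule bij_betw_byWitness[where f' = "\<lambda>(a, b). (inv \<sigma> a, inv \<sigma> b)"])
      (auto simp: increasing_pairs_def in_image inverses)
  have A: "(\<Prod>(j, k)\<in>?A. f (\<sigma> j) (\<sigma> k)) =
      (\<Prod>(a, b)\<in>{(a, b)\<in>?P. inv \<sigma> a < inv \<sigma> b}. f a b)"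
    using prod.reindex_bij_betw[OF bij_A, of "\<lambda>(a, b). f a b"] by (simp add: case_prod_beta)
  have bij_B: "bij_betw (\<lambda>(j, k). (\<sigma> k, \<sigma> j)) ?B {(a, b)\<in>?P. inv \<sigma> b < inv \<sigma> a}"
    by (rule bij_betw_byWitness[where f' = "\<lambda>(a, b). (inv \<sigma> b, inv \<sigma> a)"])
      (auto simp: increasing_pairs_def in_image inverses)
  have B: "(\<Prod>(j, k)\<in>?B. f (\<sigma> j) (\<sigma> k)) =
      (\<Prod>(a, b)\<in>{(a, b)\<in>?P. inv \<sigma> b < inv \<sigma> a}. f b a)"
    using prod.reindex_bij_betw[OF bij_B, of "\<lambda>(a, b). f b a"] by (simp add: case_prod_beta)
  have "finite ?A" "finite ?B"
    using \<open>finite S\<close> by (auto intro: finite_subset[of _ ?P])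
  then show ?thesis
    unfolding A[symmetric] B[symmetric] by (subst split(1)) (rule prod.union_disjoint, auto simp: split(2))
qed

lemma sum_permutations_eq_0_if_antisymmetric:
  fixes f :: "('a \<Rightarrow> 'a) \<Rightarrow> 'b::real_vector"
  assumes "\<tau> permutes S" and "\<And>\<sigma>. \<sigma> permutes S \<Longrightarrow> f (\<sigma> \<circ> \<tau>) = - f \<sigma>"
  shows "(\<Sum>\<sigma> | \<sigma> permutes S. f \<sigma>) = 0"
proof -
  have "(\<Sum>\<sigma> | \<sigma> permutes S. f \<sigma>) = (\<Sum>\<sigma> | \<sigma> permutes S. f (\<sigma> \<circ> \<tau>))"
    by (rule sum_permutations_compose_right[OF assms(1)])
  also have "\<dots> = - (\<Sum>\<sigma> | \<sigma> permutes S. f \<sigma>)"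
    using assms(2) by (simp add: sum_negf)
  finally have "(2::real) *\<^sub>R (\<Sum>\<sigma> | \<sigma> permutes S. f \<sigma>) = 0"
    by (metis scaleR_2 eq_neg_iff_add_eq_0)
  then show ?thesis
    by simp
qed

lemma sum_eq_except_endpoints:
  fixes f g :: "nat \<Rightarrow> 'a::ab_group_add"
  assumes "1 < n" and "\<And>l. 1 < l \<Longrightarrow> l < n \<Longrightarrow> f l = g l"
  shows "(\<Sum>l=1..n. f l) = (\<Sum>l=1..n. g l) + (f 1 - g 1) + (f n - g n)"
proof -
  have "(\<Sum>l=1..n. f l - g l) = (\<Sum>l\<in>{1, n}. f l - g l)"
    using assms by (intro sum.mono_neutral_right) (auto simp: less_le)
  then show ?thesis
    using assms(1) by (simp add: sum_subtractf algebra_simps)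
qed

definition c_factor :: "real \<Rightarrow> real \<Rightarrow> complex" where
  "c_factor q t = (1 - of_real q * exp (- \<i> * of_real t)) / (1 - exp (- \<i> * of_real t))"

definition bethe_factor :: "real \<Rightarrow> real \<Rightarrow> complex" where
  "bethe_factor q t = (1 - of_real q * exp (\<i> * of_real t)) / (exp (\<i> * of_real t) - of_real q)"

lemma C_a_eq_prod_increasing_pairs:
  "C_a n y q = (\<Prod>(j, k)\<in>increasing_pairs {1..n}. c_factor q (y j - y k))"
proof -
  have "increasing_pairs {1..n} = Sigma {1..n} (\<lambda>j. {j<..n})"
    by (auto simp: increasing_pairs_def)
  then show ?thesis
    by (simp add: C_a_def c_factor_def prod.Sigma)
qed

lemma increasing_pairs_split_first_row:
  "increasing_pairs {1..n} = Pair 1 ` {2..n} \<union> increasing_pairs {2..n :: nat}"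
  by (auto simp: increasing_pairs_def)

lemma C_a_split_first_row:
  "C_a n y q = (\<Prod>k=2..n. c_factor q (y 1 - y k)) *
     (\<Prod>(j, k)\<in>increasing_pairs {2..n}. c_factor q (y j - y k))"
proof -
  have "Pair 1 ` {2..n} \<inter> increasing_pairs {2..n} = {}"
    by (auto simp: increasing_pairs_def)
  then show ?thesis
    unfolding C_a_eq_prod_increasing_pairs increasing_pairs_split_first_row
    by (simp add: prod.union_disjoint prod.reindex inj_on_def)
qed

definition cyclic_shift :: "nat \<Rightarrow> nat \<Rightarrow> nat" where
  "cyclic_shift n l = (if 1 \<le> l \<and> l < n then Suc l else if l = n then 1 else l)"

lemma cyclic_shift_permutes: "1 \<le> n \<Longrightarrow> cyclic_shift n permutes {1..n}"
  by (rule bij_imp_permutes, rule bij_betw_byWitness[where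
        f' = "\<lambda>l. if 2 \<le> l \<and> l \<le> n then l - 1 else if l = 1 then n else l"])
    (auto simp: cyclic_shift_def)

lemma inv_cyclic_shift:
  assumes "1 \<le> n"
  shows "inv (cyclic_shift n) l = (if 2 \<le> l \<and> l \<le> n then l - 1 else if l = 1 then n else l)"
  using assms by (subst permutes_inv_eq[OF cyclic_shift_permutes[OF assms]]) (auto simp: cyclic_shift_def)

lemma C_a_cyclic_shift_first_row:
  assumes "1 \<le> n"
  shows "C_a n (y \<circ> cyclic_shift n) q = (\<Prod>k=2..n. c_factor q (y k - y 1)) *
     (\<Prod>(j, k)\<in>increasing_pairs {2..n}. c_factor q (y j - y k))"
proof -
  let ?P = "increasing_pairs {1..n :: nat}"
  have "{(a, b)\<in>?P. inv (cyclic_shift n) a < inv (cyclic_shift n) b} = increasing_pairs {2..n}"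
    "{(a, b)\<in>?P. inv (cyclic_shift n) b < inv (cyclic_shift n) a} = Pair 1 ` {2..n}"
    using assms by (auto simp: increasing_pairs_def inv_cyclic_shift)
  with prod_increasing_pairs_permute[OF _ cyclic_shift_permutes[OF assms],
      of "\<lambda>a b. c_factor q (y a - y b)"]
  show ?thesis
    by (simp add: C_a_eq_prod_increasing_pairs prod.reindex inj_on_def mult.commute)
qed

lemma c_factor_uminus:
  assumes "exp (\<i> * of_real t) \<noteq> 1" and "\<bar>q\<bar> < 1"
  shows "c_factor q (- t) = - bethe_factor q t * c_factor q t"
proof -
  define z where "z = exp (\<i> * of_real t)"
  have z_ne_q: "z - of_real q \<noteq> 0"
  proof
    assume "z - of_real q = 0"
    then have "norm z = \<bar>q\<bar>" by simp
    then show False using assms(2) by (simp add: z_def)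
  qed
  have z: "z \<noteq> 0" "z - 1 \<noteq> 0" "1 - z \<noteq> 0"
    using assms(1) by (auto simp: z_def)
  have inverse: "exp (- \<i> * of_real t) = inverse z"
    by (simp add: z_def exp_minus)
  have c_t: "c_factor q t = (z - of_real q) / (z - 1)"
    using z unfolding c_factor_def inverse by (simp add: divide_simps)
  have c_minus_t: "c_factor q (- t) = (1 - of_real q * z) / (1 - z)"
    by (simp add: c_factor_def z_def)
  have bethe_t: "bethe_factor q t = (1 - of_real q * z) / (z - of_real q)"
    by (simp add: bethe_factor_def z_def)
  have "- bethe_factor q t * c_factor q t = - ((1 - of_real q * z) / (z - 1))"
    unfolding c_t bethe_t using z_ne_q by (simp add: minus_divide_left)
  also have "\<dots> = c_factor q (- t)"
    unfolding c_minus_t by (metis minus_diff_eq minus_divide_right)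
  finally show ?thesis ..
qed

lemma c_factor_swap:
  assumes "exp (\<i> * of_real t) \<noteq> 1"
  shows "c_factor q (- t) * exp (\<i> * of_real t) * (1 - of_real q * exp (- \<i> * of_real t)) =
    - c_factor q t * (1 - of_real q * exp (\<i> * of_real t))"
proof -
  define z where "z = exp (\<i> * of_real t)"
  have z: "z \<noteq> 0" "1 - z \<noteq> 0" "z - 1 \<noteq> 0"
    using assms by (auto simp: z_def)
  have inverse: "exp (- \<i> * of_real t) = 1 / z"
    by (simp add: z_def exp_minus field_simps)
  show ?thesis
    unfolding c_factor_def inverse using z by (simp add: z_def[symmetric] field_simps)
qed

lemma C_a_cyclic_shift:
  assumes "2 \<le> n" and "\<bar>q\<bar> < 1"
    and "\<And>k. k \<in> {2..n} \<Longrightarrow> exp (\<i> * of_real (y 1 - y k)) \<noteq> 1"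
  shows "C_a n (y \<circ> cyclic_shift n) q =
    (-1) ^ (n - 1) * (\<Prod>k=2..n. bethe_factor q (y 1 - y k)) * C_a n y q"
proof -
  have "(\<Prod>k=2..n. c_factor q (y k - y 1)) =
      (\<Prod>k=2..n. - 1 * (bethe_factor q (y 1 - y k) * c_factor q (y 1 - y k)))"
    using c_factor_uminus[OF assms(3) assms(2)] by (intro prod.cong) (auto simp: minus_diff_eq)
  also have "\<dots> = (-1) ^ (n - 1) * (\<Prod>k=2..n. bethe_factor q (y 1 - y k)) *
      (\<Prod>k=2..n. c_factor q (y 1 - y k))"
    unfolding prod.distrib prod_constant by simp
  finally show ?thesis
    using assms(1) by (simp add: C_a_cyclic_shift_first_row C_a_split_first_row[of n y])
qed

lemma C_a_split_first_pair:
  assumes "2 \<le> n"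
  shows "C_a n y q = c_factor q (y 1 - y 2) *
    (\<Prod>(j, k)\<in>increasing_pairs {1..n} - {(1, 2)}. c_factor q (y j - y k))"
proof -
  have "(1, 2) \<in> increasing_pairs {1..n}"
    using assms by (simp add: increasing_pairs_def)
  then show ?thesis
    unfolding C_a_eq_prod_increasing_pairs by (simp add: prod.remove)
qed

lemma C_a_transpose_first_pair:
  assumes "2 \<le> n"
  shows "C_a n (y \<circ> Transposition.transpose 1 2) q = c_factor q (y 2 - y 1) *
    (\<Prod>(j, k)\<in>increasing_pairs {1..n} - {(1, 2)}. c_factor q (y j - y k))"
proof -
  let ?P = "increasing_pairs {1..n :: nat}"
  let ?\<tau> = "Transposition.transpose (1 :: nat) 2"
  have "{(a, b)\<in>?P. inv ?\<tau> a < inv ?\<tau> b} = ?P - {(1, 2)}"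
    "{(a, b)\<in>?P. inv ?\<tau> b < inv ?\<tau> a} = {(1, 2)}"
    using assms by (auto simp: increasing_pairs_def Transposition.transpose_def split: if_splits)
  with prod_increasing_pairs_permute[OF _ permutes_swap_id, of "{1..n}" 1 2
      "\<lambda>a b. c_factor q (y a - y b)"]
  show ?thesis
    using assms by (simp add: C_a_eq_prod_increasing_pairs mult.commute)
qed

definition diff_summand :: "nat \<Rightarrow> real \<Rightarrow> (nat \<Rightarrow> real) \<Rightarrow> (nat \<Rightarrow> real) \<Rightarrow> complex" where
  "diff_summand n q \<mu> y = C_a n y q * exp (\<i> * of_real (\<Sum>l=1..n. y l * \<mu> l)) *
     (1 - of_real q * exp (- \<i> * of_real (y 1 - y n)))"

lemma P_a_diff:
  assumes "2 \<le> n"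
  shows "P_a n \<xi> q \<mu> -
      of_real q * P_a n \<xi> q (\<lambda>l. \<mu> l - (if l = 1 then 1 else 0) + (if l = n then 1 else 0)) =
    (\<Sum>\<sigma> | \<sigma> permutes {1..n}. diff_summand n q \<mu> (\<xi> \<circ> \<sigma>))"
  unfolding P_a_def sum_distrib_left sum_subtractf[symmetric]
proof (rule sum.cong[OF refl])
  fix \<sigma> :: "nat \<Rightarrow> nat"
  have "(\<Sum>l=1..n. \<xi> (\<sigma> l) * (\<mu> l - (if l = 1 then 1 else 0) + (if l = n then 1 else 0))) =
      (\<Sum>l=1..n. \<xi> (\<sigma> l) * \<mu> l) - (\<xi> (\<sigma> 1) - \<xi> (\<sigma> n))"
    using assms by (subst sum_eq_except_endpoints) (auto simp: algebra_simps)
  moreover have "exp (\<i> * of_real (a - b)) = exp (\<i> * of_real a) * exp (- \<i> * of_real b)" for a b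
    by (simp add: exp_diff exp_minus field_simps)
  ultimately show "C_a n (\<lambda>l. \<xi> (\<sigma> l)) q * exp (\<i> * of_real (\<Sum>l=1..n. \<xi> (\<sigma> l) * \<mu> l)) -
      of_real q * (C_a n (\<lambda>l. \<xi> (\<sigma> l)) q * exp (\<i> * of_real (\<Sum>l=1..n. \<xi> (\<sigma> l) *
        (\<mu> l - (if l = 1 then 1 else 0) + (if l = n then 1 else 0))))) =
      diff_summand n q \<mu> (\<xi> \<circ> \<sigma>)"
    unfolding diff_summand_def comp_def by (simp only:) (simp add: algebra_simps)
qed

text \<open>The summand after the cyclic shift, with C already transformed by the Bethe equation at y_1.\<close>

definition rotated_summand ::
    "nat \<Rightarrow> nat \<Rightarrow> real \<Rightarrow> (nat \<Rightarrow> real) \<Rightarrow> (nat \<Rightarrow> real) \<Rightarrow> complex" where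
  "rotated_summand n m q \<mu> y = exp (\<i> * of_nat m * of_real (y 1)) * C_a n y q *
     exp (\<i> * of_real (\<Sum>l=1..n. y (cyclic_shift n l) * \<mu> l)) *
     (1 - of_real q * exp (- \<i> * of_real (y 2 - y 1)))"

lemma diff_summand_cyclic_shift:
  assumes "2 \<le> n" and "\<bar>q\<bar> < 1"
    and "\<And>k. k \<in> {2..n} \<Longrightarrow> exp (\<i> * of_real (y 1 - y k)) \<noteq> 1"
    and "exp (\<i> * of_nat m * of_real (y 1)) = (-1) ^ (n - 1) * (\<Prod>k=2..n. bethe_factor q (y 1 - y k))"
  shows "diff_summand n q \<mu> (y \<circ> cyclic_shift n) = rotated_summand n m q \<mu> y"
proof -
  have "cyclic_shift n 1 = 2" "cyclic_shift n n = 1"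
    using assms(1) by (auto simp: cyclic_shift_def)
  moreover have "C_a n (y \<circ> cyclic_shift n) q = exp (\<i> * of_nat m * of_real (y 1)) * C_a n y q"
    using C_a_cyclic_shift[of n q y, OF assms(1-3)] assms(4) by simp
  ultimately show ?thesis
    unfolding diff_summand_def rotated_summand_def by (simp add: comp_def)
qed

lemma rotated_summand_transpose:
  assumes "2 \<le> n" and "\<mu> 1 - \<mu> n = real m + 1"
    and "exp (\<i> * of_real (y 1 - y 2)) \<noteq> 1"
  shows "rotated_summand n m q \<mu> (y \<circ> Transposition.transpose 1 2) = - rotated_summand n m q \<mu> y"
proof -
  define y' where "y' = y \<circ> Transposition.transpose 1 2"
  define t where "t = y 1 - y 2"
  define S where "S x = (\<Sum>l=1..n. x (cyclic_shift n l) * \<mu> l)" for x :: "nat \<Rightarrow> real"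
  define K where "K = (\<Prod>(j, k)\<in>increasing_pairs {1..n} - {(1, 2)}. c_factor q (y j - y k))"
  have y': "y' 1 = y 2" "y' 2 = y 1"
    by (simp_all add: y'_def)
  have shift: "cyclic_shift n 1 = 2" "cyclic_shift n n = 1"
    using assms(1) by (auto simp: cyclic_shift_def)
  have "y' (cyclic_shift n l) = y (cyclic_shift n l)" if "1 < l" "l < n" for l
    using that by (simp add: y'_def cyclic_shift_def)
  then have "S y' = S y + (y' (cyclic_shift n 1) * \<mu> 1 - y (cyclic_shift n 1) * \<mu> 1) +
      (y' (cyclic_shift n n) * \<mu> n - y (cyclic_shift n n) * \<mu> n)"
    unfolding S_def using assms(1) by (intro sum_eq_except_endpoints) auto
  also have "\<dots> = S y + (y 1 - y 2) * \<mu> 1 + (y 2 - y 1) * \<mu> n"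
    unfolding shift y' by (simp add: algebra_simps)
  finally have "real m * y' 1 + S y' = real m * y 1 + S y + t"
    using assms(2) unfolding y' t_def by (simp add: algebra_simps)
  from arg_cong[OF this, of "\<lambda>x. exp (\<i> * of_real x)"]
  have phase: "exp (\<i> * of_nat m * of_real (y' 1)) * exp (\<i> * of_real (S y')) =
      exp (\<i> * of_nat m * of_real (y 1)) * exp (\<i> * of_real (S y)) * exp (\<i> * of_real t)"
    by (simp add: distrib_left exp_add mult.assoc)
  have "rotated_summand n m q \<mu> y' = exp (\<i> * of_nat m * of_real (y 1)) * exp (\<i> * of_real (S y)) * K *
      (c_factor q (- t) * exp (\<i> * of_real t) * (1 - of_real q * exp (- \<i> * of_real t)))"
    unfolding rotated_summand_def S_def[symmetric] y'_def C_a_transpose_first_pair[OF assms(1)]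
    using phase by (simp add: y'_def t_def K_def ac_simps)
  also have "\<dots> = - (exp (\<i> * of_nat m * of_real (y 1)) * exp (\<i> * of_real (S y)) * K *
      (c_factor q t * (1 - of_real q * exp (\<i> * of_real t))))"
    using c_factor_swap[of t q] assms(3) by (simp add: t_def)
  also have "\<dots> = - rotated_summand n m q \<mu> y"
  proof -
    have "y 2 - y 1 = - t"
      by (simp add: t_def)
    then show ?thesis
      unfolding rotated_summand_def S_def[symmetric] C_a_split_first_pair[OF assms(1)]
        t_def[symmetric] K_def[symmetric]
      by (simp add: ac_simps)
  qed
  finally show ?thesis
    by (simp add: y'_def)
qed

lemma permuted_nondegeneracy:
  assumes "\<forall>j\<in>{1..n}. \<forall>k\<in>{1..n}. j \<noteq> k \<longrightarrow> (\<forall>z::int. \<xi> j - \<xi> k \<noteq> 2 * pi * of_int z)"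
    and "\<sigma> permutes {1..n}" and "j \<in> {1..n}" and "k \<in> {1..n}" and "j \<noteq> k"
  shows "exp (\<i> * of_real ((\<xi> \<circ> \<sigma>) j - (\<xi> \<circ> \<sigma>) k)) \<noteq> 1"
proof
  assume "exp (\<i> * of_real ((\<xi> \<circ> \<sigma>) j - (\<xi> \<circ> \<sigma>) k)) = 1"
  then obtain z :: int where "\<xi> (\<sigma> j) - \<xi> (\<sigma> k) = 2 * pi * of_int z"
    by (auto simp: exp_eq_1 mult.commute)
  moreover have "\<sigma> j \<in> {1..n}" "\<sigma> k \<in> {1..n}"
    using permutes_in_image[OF assms(2)] assms(3,4) by blast+
  moreover have "\<sigma> j \<noteq> \<sigma> k"
    using permutes_inj[OF assms(2)] assms(5) by (meson injD)
  ultimately show False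
    using assms(1) by blast
qed

lemma permuted_bethe_equation:
  assumes "\<forall>j\<in>{1..n}. exp (\<i> * of_nat m * of_real (\<xi> j)) =
      (-1) ^ (n - 1) * (\<Prod>k\<in>{1..n} - {j}.
        (1 - of_real q * exp (\<i> * of_real (\<xi> j - \<xi> k))) /
        (exp (\<i> * of_real (\<xi> j - \<xi> k)) - of_real q))"
    and "\<sigma> permutes {1..n}" and "1 \<le> n"
  shows "exp (\<i> * of_nat m * of_real ((\<xi> \<circ> \<sigma>) 1)) =
    (-1) ^ (n - 1) * (\<Prod>k=2..n. bethe_factor q ((\<xi> \<circ> \<sigma>) 1 - (\<xi> \<circ> \<sigma>) k))"
proof -
  have "{1..n} - {\<sigma> 1} = \<sigma> ` {2..n}"
  proof -
    have "{2..n} = {1..n} - {1}" by auto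
    then show ?thesis
      using permutes_inj[OF assms(2)] permutes_image[OF assms(2)] by (simp add: image_set_diff)
  qed
  moreover have "inj_on \<sigma> {2..n}"
    using permutes_inj[OF assms(2)] by (rule inj_on_subset) simp
  moreover have "\<sigma> 1 \<in> {1..n}"
    using permutes_in_image[OF assms(2)] assms(3) by simp
  ultimately show ?thesis
    using assms(1) by (simp add: prod.reindex bethe_factor_def)
qed

theorem mainTheorem8:
  fixes n m :: nat and q :: real and \<xi> \<mu> :: "nat \<Rightarrow> real"
  assumes "n \<ge> 2" and "m > 0" and "-1 < q" and "q < 1"
    and "\<forall>j\<in>{1..n}. \<forall>k\<in>{1..n}. j \<noteq> k \<longrightarrow> (\<forall>z::int. \<xi> j - \<xi> k \<noteq> 2 * pi * of_int z)"
    and "\<forall>j\<in>{1..n}. exp (\<i> * of_nat m * of_real (\<xi> j)) =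
           (-1) ^ (n - 1) * (\<Prod>k\<in>{1..n} - {j}.
              (1 - of_real q * exp (\<i> * of_real (\<xi> j - \<xi> k))) /
              (exp (\<i> * of_real (\<xi> j - \<xi> k)) - of_real q))"
    and "\<mu> \<in> weight_lattice n"
    and "\<mu> 1 - \<mu> n = real m + 1"
  shows "P_a n \<xi> q \<mu> =
    of_real q * P_a n \<xi> q (\<lambda>l. \<mu> l - (if l = 1 then 1 else 0) + (if l = n then 1 else 0))"
proof -
  have q: "\<bar>q\<bar> < 1"
    using assms(3,4) by auto
  have rotate: "diff_summand n q \<mu> (\<xi> \<circ> \<sigma> \<circ> cyclic_shift n) = rotated_summand n m q \<mu> (\<xi> \<circ> \<sigma>)"
    if "\<sigma> permutes {1..n}" for \<sigma>
    using assms(1) q permuted_nondegeneracy[OF assms(5) that] permuted_bethe_equation[OF assms(6) that]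
    by (intro diff_summand_cyclic_shift) auto
  have antisymmetric: "rotated_summand n m q \<mu> (\<xi> \<circ> (\<sigma> \<circ> Transposition.transpose 1 2)) =
      - rotated_summand n m q \<mu> (\<xi> \<circ> \<sigma>)" if "\<sigma> permutes {1..n}" for \<sigma>
    unfolding comp_assoc[symmetric] using assms(1)
    by (intro rotated_summand_transpose assms(8) permuted_nondegeneracy[OF assms(5) that]) auto
  have "P_a n \<xi> q \<mu> -
      of_real q * P_a n \<xi> q (\<lambda>l. \<mu> l - (if l = 1 then 1 else 0) + (if l = n then 1 else 0)) =
      (\<Sum>\<sigma> | \<sigma> permutes {1..n}. diff_summand n q \<mu> (\<xi> \<circ> \<sigma>))"
    using assms(1) by (rule P_a_diff)
  also have "\<dots> = (\<Sum>\<sigma> | \<sigma> permutes {1..n}. diff_summand n q \<mu> (\<xi> \<circ> \<sigma> \<circ> cyclic_shift n))"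
    unfolding comp_assoc using assms(1)
    by (intro sum_permutations_compose_right[OF cyclic_shift_permutes]) auto
  also have "\<dots> = (\<Sum>\<sigma> | \<sigma> permutes {1..n}. rotated_summand n m q \<mu> (\<xi> \<circ> \<sigma>))"
    using rotate by simp
  also have "\<dots> = 0"
    by (rule sum_permutations_eq_0_if_antisymmetric[where f = "\<lambda>\<sigma>. rotated_summand n m q \<mu> (\<xi> \<circ> \<sigma>)",
          OF permutes_swap_id antisymmetric])
      (use assms(1) in auto)
  finally show ?thesis
    by simp
qed

end
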